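(* Let $M$ be an arbitrarily divisible monoid, let $N$ be a finite monoid, and let $\varphi \colon M \to N$ be a monoid morphism. Then the image $\varphi(M)$ is an idempotent monoid, i.e. $\varphi(m)^2 = \varphi(m)$ for every $m \in M$.
   Context: A monoid $M$ is called arbitrarily divisible if for every $m \in M$ and every positive integer $k$ there exists $m_k \in M$ with $(m_k)^k = m$. A monoid morphism $\varphi\colon M\to N$ satisfies $\varphi(1_M)=1_N$ and $\varphi(m_1m_2)=\varphi(m_1)\varphi(m_2)$. A monoid is idempotent if every element $e$ satisfies $e^2=e$. *)

theory Defs
  imports "HOL-Algebra.Group"
begin

definition arbitrarily_divisible :: "('a, 'b) monoid_scheme \<Rightarrow> bool" where
  "arbitrarily_divisible M \<longleftrightarrow>
     (\<forall>m \<in> carrier M. \<forall>k::nat. k > 0 \<longrightarrow> (\<exists>mk \<in> carrier M. mk [^]\<^bsub>M\<^esub> k = m))"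

definition monoid_morphism ::
  "('a, 'b) monoid_scheme \<Rightarrow> ('c, 'd) monoid_scheme \<Rightarrow> ('a \<Rightarrow> 'c) \<Rightarrow> bool" where
  "monoid_morphism M N \<phi> \<longleftrightarrow>
     (\<forall>m \<in> carrier M. \<phi> m \<in> carrier N) \<and>
     \<phi> \<one>\<^bsub>M\<^esub> = \<one>\<^bsub>N\<^esub> \<and>
     (\<forall>m1 \<in> carrier M. \<forall>m2 \<in> carrier M. \<phi> (m1 \<otimes>\<^bsub>M\<^esub> m2) = \<phi> m1 \<otimes>\<^bsub>N\<^esub> \<phi> m2)"

end

theory Submission
  imports Defs
begin

text \<open>In a monoid with n elements the powers of any x become periodic from an exponent
  i \<le> n on, with a period p \<le> n. Since both i \<le> n! and p dvd n!, the power x [^] n! lies in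
  the periodic part and doubling its exponent adds a multiple of the period, so it is idempotent.
  For the theorem, write m = y [^] n! using divisibility in M; then \<phi> m = \<phi> y [^] n!.\<close>

lemma (in monoid) nat_pow_repeats_within_card:
  assumes fin: "finite (carrier G)" and x: "x \<in> carrier G"
  shows "\<exists>i p. 0 < p \<and> i \<le> card (carrier G) \<and> p \<le> card (carrier G) \<and> x [^] i = x [^] (i + p)"
proof -
  let ?n = "card (carrier G)"
  have "(\<lambda>k. x [^] k) ` {0..?n} \<subseteq> carrier G" using x by auto
  then have "card ((\<lambda>k. x [^] k) ` {0..?n}) \<le> ?n" using fin card_mono by blast
  then have "\<not> inj_on (\<lambda>k. x [^] k) {0..?n}" by (intro pigeonhole) simp
  then obtain a b where ab: "a \<le> ?n" "b \<le> ?n" "a < b" "x [^] a = x [^] b"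
    unfolding inj_on_def by (metis atLeastAtMost_iff linorder_neqE_nat)
  then show ?thesis by (intro exI[of _ a] exI[of _ "b - a"]) auto
qed

lemma (in monoid) nat_pow_periodic:
  fixes i p j t :: nat
  assumes x: "x \<in> carrier G" and period: "x [^] i = x [^] (i + p)" and "i \<le> j"
  shows "x [^] (j + t * p) = x [^] j"
proof -
  obtain c where j: "j = i + c" using \<open>i \<le> j\<close> le_Suc_ex by blast
  show ?thesis
  proof (induction t)
    case 0
    show ?case by simp
  next
    case (Suc t)
    have "x [^] (j + Suc t * p) = x [^] (i + p) \<otimes> x [^] (c + t * p)"
      using x by (simp add: j nat_pow_mult algebra_simps)
    also have "\<dots> = x [^] i \<otimes> x [^] (c + t * p)" using period by simp
    also have "\<dots> = x [^] (j + t * p)" using x by (simp add: j nat_pow_mult algebra_simps)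
    finally show ?case using Suc by simp
  qed
qed

lemma (in monoid) nat_pow_fact_card_idem:
  assumes fin: "finite (carrier G)" and x: "x \<in> carrier G"
  defines "f \<equiv> fact (card (carrier G)) :: nat"
  shows "x [^] f \<otimes> x [^] f = x [^] f"
proof -
  obtain i p where ip: "0 < p" "i \<le> card (carrier G)" "p \<le> card (carrier G)"
    and period: "x [^] i = x [^] (i + p)"
    using nat_pow_repeats_within_card[OF fin x] by blast
  have "p dvd f" using ip by (simp add: f_def dvd_fact)
  then obtain t where t: "f = t * p" by (metis dvd_def mult.commute)
  have "i \<le> f" using ip(2) fact_ge_self[of "card (carrier G)"] by (simp add: f_def)
  have "x [^] f \<otimes> x [^] f = x [^] (f + t * p)" using x by (simp add: nat_pow_mult flip: t)
  also have "\<dots> = x [^] f" using nat_pow_periodic[OF x period \<open>i \<le> f\<close>] .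
  finally show ?thesis .
qed

lemma monoid_morphism_nat_pow:
  assumes "monoid M" "monoid N" "monoid_morphism M N \<phi>" "x \<in> carrier M"
  shows "\<phi> (x [^]\<^bsub>M\<^esub> (k::nat)) = \<phi> x [^]\<^bsub>N\<^esub> k"
proof (induction k)
  case 0
  show ?case using assms by (simp add: monoid_morphism_def)
next
  case (Suc k)
  have "\<phi> (x [^]\<^bsub>M\<^esub> Suc k) = \<phi> (x [^]\<^bsub>M\<^esub> k) \<otimes>\<^bsub>N\<^esub> \<phi> x"
    using assms monoid.nat_pow_closed[OF assms(1)] by (simp add: monoid_morphism_def)
  then show ?case using Suc by simp
qed

theorem proposition2:
  fixes M :: "('a, 'b) monoid_scheme" and N :: "('c, 'd) monoid_scheme" and \<phi> :: "'a \<Rightarrow> 'c"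
  assumes "monoid M" and "arbitrarily_divisible M"
    and "monoid N" and "finite (carrier N)"
    and "monoid_morphism M N \<phi>"
  shows "\<forall>m \<in> carrier M. \<phi> m \<otimes>\<^bsub>N\<^esub> \<phi> m = \<phi> m"
proof
  fix m assume m: "m \<in> carrier M"
  let ?f = "fact (card (carrier N)) :: nat"
  have "?f > 0" by simp
  then obtain y where y: "y \<in> carrier M" "y [^]\<^bsub>M\<^esub> ?f = m"
    using assms(2) m unfolding arbitrarily_divisible_def by blast
  have "\<phi> y \<in> carrier N" using assms(5) y(1) by (simp add: monoid_morphism_def)
  then have idem: "\<phi> y [^]\<^bsub>N\<^esub> ?f \<otimes>\<^bsub>N\<^esub> \<phi> y [^]\<^bsub>N\<^esub> ?f = \<phi> y [^]\<^bsub>N\<^esub> ?f"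
    by (rule monoid.nat_pow_fact_card_idem[OF assms(3,4)])
  have "\<phi> m = \<phi> y [^]\<^bsub>N\<^esub> ?f"
    using monoid_morphism_nat_pow[OF assms(1,3,5) y(1), of ?f] y(2) by simp
  with idem show "\<phi> m \<otimes>\<^bsub>N\<^esub> \<phi> m = \<phi> m" by simp
qed

end
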